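(* Let $G$ be a nilpotent Lie group of dimension $2n$ with a left-invariant $\mathrm{SL}(n,\mathbb{R})$-structure whose underlying almost paracomplex structure is integrable (paracomplex). Then its associated one-forms satisfy \[\lambda=\frac{n-1}{n}\,(f_8-f_4).\]
   Context: An $\mathrm{SL}(n,\mathbb{R})$-structure on a $2n$-manifold is a splitting $TM=V\oplus H$ into rank-$n$ distributions, $K=\mathrm{id}_V-\mathrm{id}_H$, a neutral metric $g$ with $g(KX,KY)=-g(X,Y)$, and forms $F,\alpha,\beta$ such that locally there are coframes $e^1,\dots,e^{2n}$ with $V=\{e^{n+1}=\dots=e^{2n}=0\}$, $H=\{e^1=\dots=e^n=0\}$, $g=\sum_i(e^i\otimes e^{n+i}+e^{n+i}\otimes e^i)$, $F=\sum_ie^i\wedge e^{n+i}$, $\alpha=e^1\wedge\dots\wedge e^n$, $\beta=e^{n+1}\wedge\dots\wedge e^{2n}$; $(e_I)$ is the dual frame. It is paracomplex if $V$ and $H$ are integrable. Forms split by type $\Lambda^{p,q}$ ($p$ factors among $e^1,\dots,e^n$, $q$ among $e^{n+1},\dots,e^{2n}$). The one-form $\lambda$ is $\lambda(X)=\frac1n\sum_{i=1}^ng(\nabla_Xe_i,e_{n+i})$, $\nabla$ the Levi-Civita connection. For $\gamma\in\Lambda^{2,1}\oplus\Lambda^{1,2}$ set $\Lambda(\gamma)=-\frac1{n-1}\sum_{i=1}^n e_i\lrcorner(e_{n+i}\lrcorner\gamma)$, and define $f_4=-\frac12\Lambda\big((dF)^{1,2}\big)\in\Lambda^{0,1}$ and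 $f_8=-\frac12\Lambda\big((dF)^{2,1}\big)\in\Lambda^{1,0}$. *)

theory Defs
  imports Complex_Main
begin

text \<open>Left-invariant objects on a Lie group of dimension N = 2n are encoded on its Lie
algebra, with respect to a left-invariant adapted frame e_0,...,e_{N-1}
(e_0..e_{n-1} span V, e_n..e_{2n-1} span H).  The Lie algebra is given by structure
constants: [e_i, e_j] = sum_k c i j k e_k.  Vectors are functions nat => real,
the components with index >= N being irrelevant.\<close>

definition basis_vec :: "nat \<Rightarrow> nat \<Rightarrow> real" where
  "basis_vec a = (\<lambda>k. if k = a then 1 else 0)"

definition lie_br :: "nat \<Rightarrow> (nat \<Rightarrow> nat \<Rightarrow> nat \<Rightarrow> real) \<Rightarrow> (nat \<Rightarrow> real) \<Rightarrow> (nat \<Rightarrow> real) \<Rightarrow> (nat \<Rightarrow> real)" where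
  "lie_br N c x y = (\<lambda>k. if k < N then (\<Sum>i<N. \<Sum>j<N. x i * y j * c i j k) else 0)"

definition is_lie_algebra :: "nat \<Rightarrow> (nat \<Rightarrow> nat \<Rightarrow> nat \<Rightarrow> real) \<Rightarrow> bool" where
  "is_lie_algebra N c \<longleftrightarrow>
     (\<forall>i<N. \<forall>j<N. \<forall>k<N. c i j k = - c j i k) \<and>
     (\<forall>i<N. \<forall>j<N. \<forall>k<N. \<forall>m<N.
        (\<Sum>l<N. c i j l * c l k m + c j k l * c l i m + c k i l * c l j m) = 0)"

fun iter_br :: "nat \<Rightarrow> (nat \<Rightarrow> nat \<Rightarrow> nat \<Rightarrow> real) \<Rightarrow> (nat \<Rightarrow> real) list \<Rightarrow> (nat \<Rightarrow> real)" where
  "iter_br N c [] = (\<lambda>_. 0)"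
| "iter_br N c [x] = x"
| "iter_br N c (x # xs) = lie_br N c x (iter_br N c xs)"

text \<open>Nilpotent: the lower central series reaches 0, i.e. for some m all iterated
brackets [x_1,[x_2,...,[x_{m-1},x_m]...]] vanish (they span g^{(m)}).\<close>
definition nilpotent_lie :: "nat \<Rightarrow> (nat \<Rightarrow> nat \<Rightarrow> nat \<Rightarrow> real) \<Rightarrow> bool" where
  "nilpotent_lie N c \<longleftrightarrow> (\<exists>m\<ge>1. \<forall>xs. length xs = m \<and> (\<forall>x\<in>set xs. \<forall>k\<ge>N. x k = 0)
        \<longrightarrow> (\<forall>k<N. iter_br N c xs k = 0))"

text \<open>Integrability of V and H (left-invariant distributions): they are subalgebras.\<close>
definition paracomplex_sc :: "nat \<Rightarrow> (nat \<Rightarrow> nat \<Rightarrow> nat \<Rightarrow> real) \<Rightarrow> bool" where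
  "paracomplex_sc n c \<longleftrightarrow>
     (\<forall>i<n. \<forall>j<n. \<forall>k. n \<le> k \<and> k < 2*n \<longrightarrow> c i j k = 0) \<and>
     (\<forall>i j k. n \<le> i \<and> i < 2*n \<and> n \<le> j \<and> j < 2*n \<and> k < n \<longrightarrow> c i j k = 0)"

definition slmetric :: "nat \<Rightarrow> nat \<Rightarrow> nat \<Rightarrow> real" where
  "slmetric n a b = (if (a < n \<and> b = a + n) \<or> (b < n \<and> a = b + n) then 1 else 0)"

definition gvec :: "nat \<Rightarrow> (nat \<Rightarrow> real) \<Rightarrow> (nat \<Rightarrow> real) \<Rightarrow> real" where
  "gvec n x y = (\<Sum>a<2*n. \<Sum>b<2*n. x a * y b * slmetric n a b)"

text \<open>Levi-Civita connection on left-invariant fields: Gamma a b d = g(nabla_{e_a} e_b, e_d),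
the unique such coefficients with torsion zero and metric compatibility
(for left-invariant fields, X(g(Y,Z)) = 0).\<close>
definition levi_civita :: "nat \<Rightarrow> (nat \<Rightarrow> nat \<Rightarrow> nat \<Rightarrow> real) \<Rightarrow> nat \<Rightarrow> nat \<Rightarrow> nat \<Rightarrow> real" where
  "levi_civita n c = (THE \<Gamma>.
     (\<forall>a<2*n. \<forall>b<2*n. \<forall>d<2*n.
        \<Gamma> a b d - \<Gamma> b a d = gvec n (lie_br (2*n) c (basis_vec a) (basis_vec b)) (basis_vec d)
        \<and> \<Gamma> a b d + \<Gamma> a d b = 0) \<and>
     (\<forall>a b d. \<not> (a < 2*n \<and> b < 2*n \<and> d < 2*n) \<longrightarrow> \<Gamma> a b d = 0))"

definition lambda_form :: "nat \<Rightarrow> (nat \<Rightarrow> nat \<Rightarrow> nat \<Rightarrow> real) \<Rightarrow> nat \<Rightarrow> real" where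
  "lambda_form n c a = (1 / real n) * (\<Sum>i<n. levi_civita n c a i (n + i))"

text \<open>F = sum_i e^i /\ e^{n+i} (determinant convention for wedge).\<close>
definition Fform :: "nat \<Rightarrow> (nat \<Rightarrow> real) \<Rightarrow> (nat \<Rightarrow> real) \<Rightarrow> real" where
  "Fform n x y = (\<Sum>i<n. x i * y (n + i) - x (n + i) * y i)"

definition dF :: "nat \<Rightarrow> (nat \<Rightarrow> nat \<Rightarrow> nat \<Rightarrow> real) \<Rightarrow> nat \<Rightarrow> nat \<Rightarrow> nat \<Rightarrow> real" where
  "dF n c a b d =
     - Fform n (lie_br (2*n) c (basis_vec a) (basis_vec b)) (basis_vec d)
     + Fform n (lie_br (2*n) c (basis_vec a) (basis_vec d)) (basis_vec b)
     - Fform n (lie_br (2*n) c (basis_vec b) (basis_vec d)) (basis_vec a)"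

text \<open>Component of type (p, 3-p) of a 3-form: p = number of V-indices (< n).\<close>
definition type_part3 :: "nat \<Rightarrow> nat \<Rightarrow> (nat \<Rightarrow> nat \<Rightarrow> nat \<Rightarrow> real) \<Rightarrow> nat \<Rightarrow> nat \<Rightarrow> nat \<Rightarrow> real" where
  "type_part3 n p \<gamma> a b d =
     (if (if a < n then 1 else 0) + (if b < n then 1 else 0) + (if d < n then 1 else (0::nat)) = p
      then \<gamma> a b d else 0)"

definition Lambda_op :: "nat \<Rightarrow> (nat \<Rightarrow> nat \<Rightarrow> nat \<Rightarrow> real) \<Rightarrow> nat \<Rightarrow> real" where
  "Lambda_op n \<gamma> x = - (1 / (real n - 1)) * (\<Sum>i<n. \<gamma> (n + i) i x)"

definition f4 :: "nat \<Rightarrow> (nat \<Rightarrow> nat \<Rightarrow> nat \<Rightarrow> real) \<Rightarrow> nat \<Rightarrow> real" where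
  "f4 n c x = - (1/2) * Lambda_op n (type_part3 n 1 (dF n c)) x"

definition f8 :: "nat \<Rightarrow> (nat \<Rightarrow> nat \<Rightarrow> nat \<Rightarrow> real) \<Rightarrow> nat \<Rightarrow> real" where
  "f8 n c x = - (1/2) * Lambda_op n (type_part3 n 2 (dF n c)) x"

end

theory Submission
  imports Defs "Jordan_Normal_Form.Schur_Decomposition"
begin

(*
  By the Koszul formula, 2n lambda(e_a) = sum_i (c_{a,i}^i - c_{i,n+i}^{a'} + c_{n+i,a}^{n+i}),
  where [e_i, e_j] = sum_k c_{i,j}^k e_k and e_{a'} is the g-dual of e_a.  Only one of f_4, f_8
  is nonzero at e_a, and it is a multiple of sum_i dF(e_{n+i}, e_i, e_a).  By skew-symmetry of the
  bracket this contraction is the same sum up to sign, corrected by twice a partial trace of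
  ad(e_a): over H when e_a lies in V, over V when e_a lies in H.  Since V and H are subalgebras,
  these partial traces are the traces of the maps induced by ad(e_a) on g/V and on g/H.
  Nilpotency of g makes ad(e_a), hence the induced maps, nilpotent, so both traces vanish.
*)

subsection \<open>Nilpotent matrices have trace zero\<close>

definition mat_trace :: "'a::comm_ring_1 mat \<Rightarrow> 'a" where
  "mat_trace A = (\<Sum>i<dim_row A. A $$ (i,i))"

lemma mat_trace_mult_comm:
  assumes A: "A \<in> carrier_mat n m" and B: "B \<in> carrier_mat m n"
  shows "mat_trace (A * B) = mat_trace (B * A)"
proof -
  have "mat_trace (A * B) = (\<Sum>i<n. \<Sum>j<m. A $$ (i,j) * B $$ (j,i))"
    using A B by (simp add: mat_trace_def scalar_prod_def atLeast0LessThan)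
  also have "\<dots> = (\<Sum>j<m. \<Sum>i<n. B $$ (j,i) * A $$ (i,j))"
    by (subst sum.swap) (simp add: mult.commute)
  also have "\<dots> = mat_trace (B * A)"
    using A B by (simp add: mat_trace_def scalar_prod_def atLeast0LessThan)
  finally show ?thesis .
qed

lemma mat_trace_similar_mat_wit:
  assumes "similar_mat_wit A B P Q"
  shows "mat_trace A = mat_trace B"
proof -
  obtain n where carr: "A \<in> carrier_mat n n" "B \<in> carrier_mat n n" "P \<in> carrier_mat n n"
      "Q \<in> carrier_mat n n" and QP: "Q * P = 1\<^sub>m n" and APBQ: "A = P * B * Q"
    using assms unfolding similar_mat_wit_def Let_def by auto
  have "mat_trace A = mat_trace (P * (B * Q))"
    using carr APBQ by (simp add: assoc_mult_mat)
  also have "\<dots> = mat_trace (B * Q * P)"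
    using carr by (intro mat_trace_mult_comm) auto
  also have "B * Q * P = B"
    using carr QP by (simp add: assoc_mult_mat)
  finally show ?thesis .
qed

lemma eigenvalue_nilpotent_mat:
  fixes A :: "'a::idom mat"
  assumes A: "A \<in> carrier_mat n n" and nil: "A ^\<^sub>m k = 0\<^sub>m n n" and "eigenvalue A e"
  shows "e = 0"
proof -
  obtain v where ev: "eigenvector A v e"
    using \<open>eigenvalue A e\<close> unfolding eigenvalue_def by blast
  then have v: "v \<in> carrier_vec n" "v \<noteq> 0\<^sub>v n"
    using A unfolding eigenvector_def by auto
  then obtain i where i: "i < n" "v $ i \<noteq> 0"
    by (metis eq_vecI carrier_vecD index_zero_vec)
  have "A ^\<^sub>m k *\<^sub>v v = 0\<^sub>v n"
    using nil v(1) by (intro eq_vecI) (auto simp: scalar_prod_def)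
  then have "e ^ k \<cdot>\<^sub>v v = 0\<^sub>v n"
    using eigenvector_pow[OF A ev] by simp
  then have "e ^ k * v $ i = 0"
    using i v(1) by (metis index_smult_vec(1) index_zero_vec(1) carrier_vecD)
  then show "e = 0"
    using i by simp
qed

lemma mat_trace_nilpotent_complex:
  fixes A :: "complex mat"
  assumes A: "A \<in> carrier_mat n n" and nil: "A ^\<^sub>m k = 0\<^sub>m n n"
  shows "mat_trace A = 0"
proof -
  obtain es where cp: "char_poly A = (\<Prod>e \<leftarrow> es. [:- e, 1:])" and len: "length es = n"
    using char_poly_factorized[OF A] by blast
  obtain B P Q where "schur_decomposition A es = (B, P, Q)"
    by (cases "schur_decomposition A es") auto
  then have sim: "similar_mat_wit A B P Q" and diag: "diag_mat B = es"
    using schur_decomposition[OF A cp] by auto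
  have B: "B \<in> carrier_mat n n"
    using sim A unfolding similar_mat_wit_def Let_def by auto
  have es0: "e = 0" if "e \<in> set es" for e
  proof (rule eigenvalue_nilpotent_mat[OF A nil])
    have "poly (char_poly A) e = 0"
      using that unfolding cp poly_prod_list by (induct es) auto
    then show "eigenvalue A e"
      using eigenvalue_root_char_poly[OF A] by simp
  qed
  have "B $$ (i, i) \<in> set es" if "i < n" for i
    using that B unfolding diag[symmetric] diag_mat_def by auto
  then have "mat_trace B = 0"
    using B es0 by (auto simp: mat_trace_def intro!: sum.neutral)
  then show ?thesis
    using mat_trace_similar_mat_wit[OF sim] by simp
qed

lemma mat_trace_nilpotent:
  fixes A :: "real mat"
  assumes A: "A \<in> carrier_mat n n" and nil: "A ^\<^sub>m k = 0\<^sub>m n n"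
  shows "mat_trace A = 0"
proof -
  let ?A = "map_mat complex_of_real A"
  have "?A ^\<^sub>m k = map_mat complex_of_real (A ^\<^sub>m k)"
    by (rule of_real_hom.mat_hom_pow[OF A, symmetric])
  also have "\<dots> = 0\<^sub>m n n"
    unfolding nil by (intro eq_matI) auto
  finally have "mat_trace ?A = 0"
    using mat_trace_nilpotent_complex A by simp
  moreover have "mat_trace ?A = complex_of_real (mat_trace A)"
    using A by (auto simp: mat_trace_def intro!: sum.cong)
  ultimately show ?thesis
    by simp
qed

subsection \<open>Nilpotent linear maps in the coordinate encoding\<close>

definition row_mult :: "nat \<Rightarrow> (nat \<Rightarrow> nat \<Rightarrow> real) \<Rightarrow> (nat \<Rightarrow> real) \<Rightarrow> nat \<Rightarrow> real" where
  "row_mult N M y = (\<lambda>k. if k < N then \<Sum>j<N. y j * M j k else 0)"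

definition nilpotent_map :: "nat \<Rightarrow> ((nat \<Rightarrow> real) \<Rightarrow> nat \<Rightarrow> real) \<Rightarrow> bool" where
  "nilpotent_map N f \<longleftrightarrow> (\<exists>m. \<forall>y. (\<forall>k\<ge>N. y k = 0) \<longrightarrow> (\<forall>k<N. (f ^^ m) y k = 0))"

lemma nilpotent_row_mult_trace_zero:
  assumes "nilpotent_map N (row_mult N M)"
  shows "(\<Sum>k<N. M k k) = 0"
proof -
  obtain m where nil: "\<And>y k. \<forall>k\<ge>N. y k = 0 \<Longrightarrow> k < N \<Longrightarrow> (row_mult N M ^^ m) y k = 0"
    using assms unfolding nilpotent_map_def by blast
  define A where "A = mat N N (\<lambda>(i, j). M j i)"
  have A: "A \<in> carrier_mat N N"
    unfolding A_def by simp
  have A_mult: "A *\<^sub>v vec N y = vec N (row_mult N M y)" for y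
    unfolding A_def row_mult_def
    by (intro eq_vecI) (auto simp: scalar_prod_def atLeast0LessThan mult.commute intro!: sum.cong)
  have A_pow_mult: "A ^\<^sub>m p *\<^sub>v vec N y = vec N ((row_mult N M ^^ p) y)" for p y
  proof (induct p arbitrary: y)
    case 0
    show ?case using A by simp
  next
    case (Suc p)
    have "A ^\<^sub>m Suc p *\<^sub>v vec N y = A ^\<^sub>m p *\<^sub>v (A *\<^sub>v vec N y)"
      using A by (simp, intro assoc_mult_mat_vec) auto
    then show ?case
      by (simp add: A_mult Suc funpow_Suc_right del: funpow.simps)
  qed
  have "A ^\<^sub>m m = 0\<^sub>m N N"
  proof (rule eq_matI)
    fix i j assume ij: "i < dim_row (0\<^sub>m N N :: real mat)" "j < dim_col (0\<^sub>m N N :: real mat)"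
    have Am: "dim_row (A ^\<^sub>m m) = N" "dim_col (A ^\<^sub>m m) = N"
      using A by simp_all
    have "(A ^\<^sub>m m) $$ (i, j) = (\<Sum>l<N. if l = j then (A ^\<^sub>m m) $$ (i, l) else 0)"
      using ij by simp
    also have "\<dots> = (\<Sum>l<N. (A ^\<^sub>m m) $$ (i, l) * basis_vec j l)"
      by (intro sum.cong) (auto simp: basis_vec_def)
    also have "\<dots> = (A ^\<^sub>m m *\<^sub>v vec N (basis_vec j)) $ i"
      using ij Am by (auto simp: scalar_prod_def atLeast0LessThan intro!: sum.cong)
    also have "\<dots> = 0"
      using ij nil[of "basis_vec j" i] by (simp add: A_pow_mult basis_vec_def)
    finally show "(A ^\<^sub>m m) $$ (i, j) = 0\<^sub>m N N $$ (i, j)"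
      using ij by simp
  qed (use A in auto)
  then have "mat_trace A = 0"
    using mat_trace_nilpotent[OF A] by blast
  then show ?thesis
    unfolding mat_trace_def A_def by simp
qed

text \<open>If the coordinates outside \<open>Q\<close> span an invariant subspace, \<open>M\<close> restricted to \<open>Q \<times> Q\<close>
is the matrix of the induced map on the quotient, which inherits nilpotency.\<close>

lemma diagonal_block_trace_zero:
  assumes nil: "nilpotent_map N (row_mult N M)" and Q: "Q \<subseteq> {..<N}"
    and block: "\<And>j k. j < N \<Longrightarrow> j \<notin> Q \<Longrightarrow> k \<in> Q \<Longrightarrow> M j k = 0"
  shows "(\<Sum>k\<in>Q. M k k) = 0"
proof -
  define M' where "M' j k = (if j \<in> Q \<and> k \<in> Q then M j k else 0)" for j k
  have QN: "{..<N} \<inter> Q = Q"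
    using Q by blast
  have M_on_Q: "row_mult N M y k = (\<Sum>j\<in>Q. y j * M j k)" if "k \<in> Q" for y k
  proof -
    have "row_mult N M y k = (\<Sum>j<N. if j \<in> Q then y j * M j k else 0)"
      using that Q block unfolding row_mult_def by (auto intro!: sum.cong)
    then show ?thesis
      by (simp add: sum.inter_restrict[symmetric] QN)
  qed
  have M'_on_Q: "row_mult N M' y k = (\<Sum>j\<in>Q. y j * M j k)" if "k \<in> Q" for y k
  proof -
    have "row_mult N M' y k = (\<Sum>j<N. if j \<in> Q then y j * M j k else 0)"
      using that Q unfolding row_mult_def M'_def by (auto intro!: sum.cong)
    then show ?thesis
      by (simp add: sum.inter_restrict[symmetric] QN)
  qed
  have agree: "(row_mult N M' ^^ p) y k = (row_mult N M ^^ p) y k" if "k \<in> Q" for p y k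
    using that
  proof (induct p arbitrary: k)
    case (Suc p)
    then show ?case
      by (simp add: M_on_Q M'_on_Q)
  qed simp
  obtain m where m: "\<And>y k. \<forall>k\<ge>N. y k = 0 \<Longrightarrow> k < N \<Longrightarrow> (row_mult N M ^^ m) y k = 0"
    using nil unfolding nilpotent_map_def by blast
  have "nilpotent_map N (row_mult N M')"
    unfolding nilpotent_map_def
  proof (intro exI[of _ "Suc m"] allI impI)
    fix y :: "nat \<Rightarrow> real" and k assume "\<forall>k\<ge>N. y k = 0" and k: "k < N"
    show "(row_mult N M' ^^ Suc m) y k = 0"
    proof (cases "k \<in> Q")
      case True
      have "\<forall>k\<ge>N. row_mult N M y k = 0"
        by (simp add: row_mult_def)
      have "(row_mult N M' ^^ Suc m) y k = (row_mult N M ^^ Suc m) y k"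
        by (rule agree[OF True])
      also have "\<dots> = (row_mult N M ^^ m) (row_mult N M y) k"
        by (simp only: funpow_Suc_right o_apply)
      also have "\<dots> = 0"
        using m k \<open>\<forall>k\<ge>N. row_mult N M y k = 0\<close> by blast
      finally show ?thesis .
    next
      case False
      then show ?thesis
        by (simp add: row_mult_def M'_def)
    qed
  qed
  then have "(\<Sum>k<N. M' k k) = 0"
    by (rule nilpotent_row_mult_trace_zero)
  then show ?thesis
    by (simp add: M'_def sum.inter_restrict[symmetric] QN)
qed

subsection \<open>Adjoint maps of a nilpotent Lie algebra\<close>

lemma lie_br_basis_vec_left:
  assumes "a < N"
  shows "lie_br N c (basis_vec a) = row_mult N (c a)"
proof (intro ext)
  fix y k
  have "(\<Sum>i<N. \<Sum>j<N. basis_vec a i * y j * c i j k) = (\<Sum>i<N. if i = a then \<Sum>j<N. y j * c i j k else 0)"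
    by (intro sum.cong) (auto simp: basis_vec_def)
  then show "lie_br N c (basis_vec a) y k = row_mult N (c a) y k"
    using assms unfolding lie_br_def row_mult_def by simp
qed

lemma lie_br_basis_vec:
  assumes "a < N" "b < N"
  shows "lie_br N c (basis_vec a) (basis_vec b) k = (if k < N then c a b k else 0)"
proof -
  have "(\<Sum>j<N. basis_vec b j * c a j k) = (\<Sum>j<N. if j = b then c a j k else 0)"
    by (intro sum.cong) (auto simp: basis_vec_def)
  then show ?thesis
    using assms unfolding lie_br_basis_vec_left[OF assms(1)] row_mult_def by simp
qed

lemma iter_br_replicate:
  "iter_br N c (replicate p x @ [y]) = (lie_br N c x ^^ p) y"
proof (induct p)
  case (Suc p)
  then show ?case
    by (cases "replicate p x @ [y]") auto
qed simp

lemma nilpotent_lie_ad: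
  assumes "nilpotent_lie N c" and x: "\<forall>k\<ge>N. x k = 0"
  shows "nilpotent_map N (lie_br N c x)"
proof -
  obtain m where "m \<ge> 1" and nil: "\<And>xs. length xs = m \<Longrightarrow> \<forall>x\<in>set xs. \<forall>k\<ge>N. x k = 0
      \<Longrightarrow> \<forall>k<N. iter_br N c xs k = 0"
    using assms(1) unfolding nilpotent_lie_def by blast
  have "\<forall>k<N. (lie_br N c x ^^ (m - 1)) y k = 0" if "\<forall>k\<ge>N. y k = 0" for y
    using nil[of "replicate (m - 1) x @ [y]"] \<open>m \<ge> 1\<close> x that by (simp add: iter_br_replicate)
  then show ?thesis
    unfolding nilpotent_map_def by blast
qed

lemma nilpotent_lie_ad_basis_vec:
  assumes "nilpotent_lie N c" and "a < N"
  shows "nilpotent_map N (row_mult N (c a))"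
proof -
  have "\<forall>k\<ge>N. basis_vec a k = 0"
    using assms(2) by (simp add: basis_vec_def)
  then have "nilpotent_map N (lie_br N c (basis_vec a))"
    by (rule nilpotent_lie_ad[OF assms(1)])
  then show ?thesis
    unfolding lie_br_basis_vec_left[OF assms(2)] .
qed

lemma trace_ad_V_on_H_zero:
  assumes "paracomplex_sc n c" and "nilpotent_lie (2*n) c" and a: "a < n"
  shows "(\<Sum>i<n. c a (n+i) (n+i)) = 0"
proof -
  have "nilpotent_map (2*n) (row_mult (2*n) (c a))"
    using nilpotent_lie_ad_basis_vec[OF assms(2)] a by simp
  then have "(\<Sum>k\<in>{n..<2*n}. c a k k) = 0"
    by (rule diagonal_block_trace_zero) (use assms(1) a in \<open>auto simp: paracomplex_sc_def\<close>)
  then show ?thesis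
    by (simp add: sum.atLeastLessThan_shift_0 atLeast0LessThan)
qed

lemma trace_ad_H_on_V_zero:
  assumes "paracomplex_sc n c" and "nilpotent_lie (2*n) c" and a: "n \<le> a" "a < 2*n"
  shows "(\<Sum>i<n. c a i i) = 0"
proof -
  have "nilpotent_map (2*n) (row_mult (2*n) (c a))"
    using nilpotent_lie_ad_basis_vec[OF assms(2)] a by simp
  then show ?thesis
    by (rule diagonal_block_trace_zero) (use assms(1) a in \<open>auto simp: paracomplex_sc_def\<close>)
qed

subsection \<open>The Levi-Civita connection\<close>

definition dual_index :: "nat \<Rightarrow> nat \<Rightarrow> nat" where
  "dual_index n d = (if d < n then d + n else d - n)"

lemma dual_index_less: "d < 2*n \<Longrightarrow> dual_index n d < 2*n"
  by (auto simp: dual_index_def)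

lemma gvec_basis_vec:
  assumes "d < 2*n"
  shows "gvec n x (basis_vec d) = x (dual_index n d)"
proof -
  have "(\<Sum>b<2*n. x a * basis_vec d b * slmetric n a b) = x a * slmetric n a d" for a
  proof -
    have "(\<Sum>b<2*n. x a * basis_vec d b * slmetric n a b) =
        (\<Sum>b<2*n. if b = d then x a * slmetric n a d else 0)"
      by (intro sum.cong) (auto simp: basis_vec_def)
    then show ?thesis
      using assms by simp
  qed
  then have "gvec n x (basis_vec d) = (\<Sum>a<2*n. x a * slmetric n a d)"
    unfolding gvec_def by simp
  also have "\<dots> = (\<Sum>a<2*n. if a = dual_index n d then x a else 0)"
    using assms by (intro sum.cong) (auto simp: slmetric_def dual_index_def)
  finally show ?thesis
    using dual_index_less[OF assms] by simp
qed

lemma is_lie_algebra_antisym: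
  assumes "is_lie_algebra N c" "i < N" "j < N" "k < N"
  shows "c i j k = - c j i k"
  using assms unfolding is_lie_algebra_def by blast

definition levi_civita_conditions ::
    "nat \<Rightarrow> (nat \<Rightarrow> nat \<Rightarrow> nat \<Rightarrow> real) \<Rightarrow> (nat \<Rightarrow> nat \<Rightarrow> nat \<Rightarrow> real) \<Rightarrow> bool" where
  "levi_civita_conditions n c \<Gamma> \<longleftrightarrow>
     (\<forall>a<2*n. \<forall>b<2*n. \<forall>d<2*n.
        \<Gamma> a b d - \<Gamma> b a d = gvec n (lie_br (2*n) c (basis_vec a) (basis_vec b)) (basis_vec d)
        \<and> \<Gamma> a b d + \<Gamma> a d b = 0) \<and>
     (\<forall>a b d. \<not> (a < 2*n \<and> b < 2*n \<and> d < 2*n) \<longrightarrow> \<Gamma> a b d = 0)"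

definition levi_civita_koszul :: "nat \<Rightarrow> (nat \<Rightarrow> nat \<Rightarrow> nat \<Rightarrow> real) \<Rightarrow> nat \<Rightarrow> nat \<Rightarrow> nat \<Rightarrow> real" where
  "levi_civita_koszul n c a b d = (if a < 2*n \<and> b < 2*n \<and> d < 2*n then
     (c a b (dual_index n d) - c b d (dual_index n a) + c d a (dual_index n b)) / 2 else 0)"

lemma levi_civita_conditionsD:
  assumes "levi_civita_conditions n c \<Gamma>" and "a < 2*n" "b < 2*n" "d < 2*n"
  shows "\<Gamma> a b d - \<Gamma> b a d = c a b (dual_index n d)" and "\<Gamma> a b d + \<Gamma> a d b = 0"
proof -
  have "gvec n (lie_br (2*n) c (basis_vec a) (basis_vec b)) (basis_vec d) = c a b (dual_index n d)"
    using assms(2-4) by (simp add: gvec_basis_vec lie_br_basis_vec dual_index_less)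
  moreover have "\<Gamma> a b d - \<Gamma> b a d = gvec n (lie_br (2*n) c (basis_vec a) (basis_vec b)) (basis_vec d)
      \<and> \<Gamma> a b d + \<Gamma> a d b = 0"
    using assms unfolding levi_civita_conditions_def by blast
  ultimately show "\<Gamma> a b d - \<Gamma> b a d = c a b (dual_index n d)" and "\<Gamma> a b d + \<Gamma> a d b = 0"
    by simp_all
qed

lemma levi_civita_conditions_koszul:
  assumes "is_lie_algebra (2*n) c"
  shows "levi_civita_conditions n c (levi_civita_koszul n c)"
  unfolding levi_civita_conditions_def
proof (intro conjI allI impI)
  fix a b d assume h: "a < 2*n" "b < 2*n" "d < 2*n"
  have anti: "c i j (dual_index n k) = - c j i (dual_index n k)"
    if "i < 2*n" "j < 2*n" "k < 2*n" for i j k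
    using is_lie_algebra_antisym[OF assms that(1,2) dual_index_less[OF that(3)]] .
  note anti' = anti[of b a d] anti[of a d b] anti[of d b a]
  show "levi_civita_koszul n c a b d - levi_civita_koszul n c b a d =
      gvec n (lie_br (2*n) c (basis_vec a) (basis_vec b)) (basis_vec d)"
    using h anti' dual_index_less[OF h(3)]
    by (simp add: levi_civita_koszul_def gvec_basis_vec lie_br_basis_vec field_simps)
  show "levi_civita_koszul n c a b d + levi_civita_koszul n c a d b = 0"
    using h anti' by (simp add: levi_civita_koszul_def field_simps)
qed (auto simp: levi_civita_koszul_def)

text \<open>Torsion-freeness makes the difference of two solutions symmetric in its first two slots,
metric compatibility makes it skew in its last two; such a tensor vanishes.\<close>

lemma sym_skew_eq_zero:
  fixes D :: "'i \<Rightarrow> 'i \<Rightarrow> 'i \<Rightarrow> 'a::linordered_ab_group_add"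
  assumes sym: "\<And>a b d. a \<in> S \<Longrightarrow> b \<in> S \<Longrightarrow> d \<in> S \<Longrightarrow> D a b d = D b a d"
    and skew: "\<And>a b d. a \<in> S \<Longrightarrow> b \<in> S \<Longrightarrow> d \<in> S \<Longrightarrow> D a b d = - D a d b"
    and S: "a \<in> S" "b \<in> S" "d \<in> S"
  shows "D a b d = 0"
proof -
  have "D a b d = - D d a b"
    using S by (simp add: skew[of a b d] sym[of a d b])
  also have "\<dots> = D b d a"
    using S by (simp add: skew[of d a b] sym[of d b a])
  also have "\<dots> = - D a b d"
    using S by (simp add: skew[of b d a] sym[of b a d])
  finally show ?thesis
    by simp
qed

lemma levi_civita_conditions_unique:
  assumes G: "levi_civita_conditions n c \<Gamma>" and G': "levi_civita_conditions n c \<Gamma>'"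
  shows "\<Gamma> = \<Gamma>'"
proof (intro ext)
  fix a b d
  define D where "D a b d = \<Gamma> a b d - \<Gamma>' a b d" for a b d
  have sym: "D a b d = D b a d" and skew: "D a b d = - D a d b"
    if "a \<in> {..<2*n}" "b \<in> {..<2*n}" "d \<in> {..<2*n}" for a b d
    using levi_civita_conditionsD[OF G, of a b d] levi_civita_conditionsD[OF G', of a b d] that
    unfolding D_def by auto
  show "\<Gamma> a b d = \<Gamma>' a b d"
  proof (cases "a < 2*n \<and> b < 2*n \<and> d < 2*n")
    case True
    then have "D a b d = 0"
      using sym_skew_eq_zero[of "{..<2*n}" D, OF sym skew] by simp
    then show ?thesis
      unfolding D_def by simp
  next
    case False
    then show ?thesis
      using G G' unfolding levi_civita_conditions_def by simp
  qed
qed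

lemma levi_civita_eq_koszul:
  assumes "is_lie_algebra (2*n) c"
  shows "levi_civita n c = levi_civita_koszul n c"
proof -
  have "levi_civita n c = (THE \<Gamma>. levi_civita_conditions n c \<Gamma>)"
    unfolding levi_civita_def levi_civita_conditions_def ..
  also have "\<dots> = levi_civita_koszul n c"
    using levi_civita_conditions_koszul[OF assms] levi_civita_conditions_unique by blast
  finally show ?thesis .
qed

lemma lambda_form_koszul:
  assumes "is_lie_algebra (2*n) c" and a: "a < 2*n"
  shows "lambda_form n c a =
    (\<Sum>i<n. c a i i - c i (n+i) (dual_index n a) + c (n+i) a (n+i)) / (2 * real n)"
proof -
  have "levi_civita_koszul n c a i (n+i) =
      (c a i i - c i (n+i) (dual_index n a) + c (n+i) a (n+i)) / 2" if "i < n" for i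
    using that a by (simp add: levi_civita_koszul_def dual_index_def add.commute)
  then have "(\<Sum>i<n. levi_civita_koszul n c a i (n+i)) =
      (\<Sum>i<n. (c a i i - c i (n+i) (dual_index n a) + c (n+i) a (n+i)) / 2)"
    by (intro sum.cong) auto
  also have "\<dots> = (\<Sum>i<n. c a i i - c i (n+i) (dual_index n a) + c (n+i) a (n+i)) / 2"
    by (rule sum_divide_distrib[symmetric])
  finally show ?thesis
    unfolding lambda_form_def levi_civita_eq_koszul[OF assms(1)] by (simp only:) simp
qed

subsection \<open>The contraction of \<open>dF\<close>\<close>

lemma Fform_basis_vec:
  assumes "d < 2*n"
  shows "Fform n x (basis_vec d) = (if d < n then - x (n + d) else x (d - n))"
proof -
  have "Fform n x (basis_vec d) =
      (\<Sum>i<n. if n \<le> d \<and> i = d - n then x i else 0) - (\<Sum>i<n. if i = d then x (n + i) else 0)"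
    unfolding Fform_def basis_vec_def sum_subtractf[symmetric] by (intro sum.cong) auto
  then show ?thesis
    using assms by (auto simp: sum.delta')
qed

lemma dF_contraction_term:
  assumes "i < n" and "a < 2*n"
  shows "dF n c (n+i) i a =
    (if a < n then c (n+i) i (n+a) else - c (n+i) i (a-n)) - c (n+i) a (n+i) - c i a i"
  using assms unfolding dF_def by (auto simp: Fform_basis_vec lie_br_basis_vec)

lemma f4_f8_V:
  assumes "a < n"
  shows "f4 n c a = 0" and "f8 n c a = (\<Sum>i<n. dF n c (n+i) i a) / (2 * (real n - 1))"
  using assms unfolding f4_def f8_def Lambda_op_def type_part3_def by simp_all

lemma f4_f8_H:
  assumes "n \<le> a"
  shows "f8 n c a = 0" and "f4 n c a = (\<Sum>i<n. dF n c (n+i) i a) / (2 * (real n - 1))"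
  using assms unfolding f4_def f8_def Lambda_op_def type_part3_def by simp_all

lemma sum_dF_contraction_V:
  assumes L: "is_lie_algebra (2*n) c" and a: "a < n"
  shows "(\<Sum>i<n. dF n c (n+i) i a) =
    (\<Sum>i<n. c a i i - c i (n+i) (dual_index n a) + c (n+i) a (n+i)) + 2 * (\<Sum>i<n. c a (n+i) (n+i))"
proof -
  have "dF n c (n+i) i a =
      (c a i i - c i (n+i) (dual_index n a) + c (n+i) a (n+i)) + 2 * c a (n+i) (n+i)"
    if "i < n" for i
    using that a dF_contraction_term[OF that, of a c]
      is_lie_algebra_antisym[OF L, of i a i] is_lie_algebra_antisym[OF L, of i "n+i" "n+a"]
      is_lie_algebra_antisym[OF L, of "n+i" a "n+i"]
    by (simp add: dual_index_def add.commute)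
  then show ?thesis
    by (simp add: sum.distrib sum_distrib_left)
qed

lemma sum_dF_contraction_H:
  assumes L: "is_lie_algebra (2*n) c" and a: "n \<le> a" "a < 2*n"
  shows "(\<Sum>i<n. dF n c (n+i) i a) =
    2 * (\<Sum>i<n. c a i i) - (\<Sum>i<n. c a i i - c i (n+i) (dual_index n a) + c (n+i) a (n+i))"
proof -
  have "dF n c (n+i) i a =
      2 * c a i i - (c a i i - c i (n+i) (dual_index n a) + c (n+i) a (n+i))"
    if "i < n" for i
    using that a dF_contraction_term[OF that, of a c]
      is_lie_algebra_antisym[OF L, of i a i] is_lie_algebra_antisym[OF L, of i "n+i" "a-n"]
    by (simp add: dual_index_def)
  then have "(\<Sum>i<n. dF n c (n+i) i a) =
      (\<Sum>i<n. 2 * c a i i - (c a i i - c i (n+i) (dual_index n a) + c (n+i) a (n+i)))"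
    by (intro sum.cong) auto
  then show ?thesis
    by (simp only: sum_subtractf sum_distrib_left)
qed

theorem lemma8p1:
  fixes n :: nat and c :: "nat \<Rightarrow> nat \<Rightarrow> nat \<Rightarrow> real"
  assumes "n \<ge> 2"
    and "is_lie_algebra (2*n) c"
    and "nilpotent_lie (2*n) c"
    and "paracomplex_sc n c"
  shows "\<forall>a<2*n. lambda_form n c a = ((real n - 1) / real n) * (f8 n c a - f4 n c a)"
proof (intro allI impI)
  fix a assume a: "a < 2*n"
  define K where "K = (\<Sum>i<n. c a i i - c i (n+i) (dual_index n a) + c (n+i) a (n+i))"
  have nz: "real n \<noteq> 0" "real n - 1 \<noteq> 0"
    using assms(1) by auto
  have lambda: "lambda_form n c a = K / (2 * real n)"
    unfolding K_def using lambda_form_koszul[OF assms(2) a] .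
  show "lambda_form n c a = ((real n - 1) / real n) * (f8 n c a - f4 n c a)"
  proof (cases "a < n")
    case True
    then have "f4 n c a = 0" "f8 n c a = K / (2 * (real n - 1))"
      using f4_f8_V sum_dF_contraction_V[OF assms(2)] trace_ad_V_on_H_zero[OF assms(4,3)]
      by (simp_all add: K_def)
    then show ?thesis
      using nz by (simp add: lambda field_simps)
  next
    case False
    then have "f8 n c a = 0" "f4 n c a = - K / (2 * (real n - 1))"
      using a f4_f8_H sum_dF_contraction_H[OF assms(2)] trace_ad_H_on_V_zero[OF assms(4,3)]
      by (simp_all add: K_def)
    then show ?thesis
      using nz by (simp add: lambda field_simps)
  qed
qed

end
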